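(* Every $h$-perfect graph is $\hbar$-perfect. In particular, every perfect graph is $\hbar$-perfect.
   Context: A graph $G$ on $\{1,\dots,n\}$ is $h$-perfect if its stable set polytope $\operatorname{STAB}(G)$ (convex hull of incidence vectors of independent sets) equals the set of $x\in\mathbb{R}^n$ satisfying: $x_i\ge0$ for all $i$; $\sum_{i\in K}x_i\le1$ for every clique $K$ of $G$; and $\sum_{i\in C}x_i\le a$ for every odd cycle $C$ of $G$ with $2a+1$ vertices. Perfect graphs (those for which chromatic number equals clique number in every induced subgraph) are $h$-perfect. A realization of $G$ is a tuple $(S_1,\dots,S_n)$ of Pauli strings (tensor products of matrices from $\{I,X,Y,Z\}$) of common length with $S_i,S_j$ anticommuting iff $i\sim j$ and commuting otherwise; every graph has one. For $w\in\mathbb{R}^n_{\ge0}$, $\beta(G,w)=\sup_\rho\sum_iw_i\operatorname{tr}(\rho S_i)^2$ over density matrices (independent of realization), $\alpha(G,w)=\max\{\sum_{i\in I}w_i:I\text{ independent}\}$, and $G$ is $\hbar$-perfect if $\beta(G,w)=\alpha(G,w)$ for all $w\ge0$. *)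

theory Defs
  imports "HOL-Analysis.Analysis"
begin

text \<open>A (simple) graph on a finite vertex type 'a is given by an adjacency
  relation E (assumed symmetric and irreflexive in the theorem).\<close>

definition independent_set :: "('a \<Rightarrow> 'a \<Rightarrow> bool) \<Rightarrow> 'a set \<Rightarrow> bool" where
  "independent_set E I \<longleftrightarrow> (\<forall>u\<in>I. \<forall>v\<in>I. \<not> E u v)"

definition clique :: "('a \<Rightarrow> 'a \<Rightarrow> bool) \<Rightarrow> 'a set \<Rightarrow> bool" where
  "clique E K \<longleftrightarrow> (\<forall>u\<in>K. \<forall>v\<in>K. u \<noteq> v \<longrightarrow> E u v)"

text \<open>C is (the vertex set of) an odd cycle of G with 2a+1 vertices
  (a cycle subgraph, not necessarily induced).\<close>
definition odd_cycle :: "('a \<Rightarrow> 'a \<Rightarrow> bool) \<Rightarrow> 'a set \<Rightarrow> nat \<Rightarrow> bool" where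
  "odd_cycle E C a \<longleftrightarrow> 1 \<le> a \<and> (\<exists>vs. distinct vs \<and> length vs = 2 * a + 1 \<and> set vs = C \<and>
      (\<forall>i < length vs. E (vs ! i) (vs ! ((i + 1) mod length vs))))"

definition indep_vec :: "'a::finite set \<Rightarrow> real ^ 'a" where
  "indep_vec I = (\<chi> v. if v \<in> I then 1 else 0)"

definition STAB :: "('a::finite \<Rightarrow> 'a \<Rightarrow> bool) \<Rightarrow> (real ^ 'a) set" where
  "STAB E = convex hull {indep_vec I | I. independent_set E I}"

definition h_perfect :: "('a::finite \<Rightarrow> 'a \<Rightarrow> bool) \<Rightarrow> bool" where
  "h_perfect E \<longleftrightarrow> STAB E =
     {x. (\<forall>i. 0 \<le> x $ i)
       \<and> (\<forall>K. clique E K \<longrightarrow> (\<Sum>i\<in>K. x $ i) \<le> 1)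
       \<and> (\<forall>C a. odd_cycle E C a \<longrightarrow> (\<Sum>i\<in>C. x $ i) \<le> real a)}"

definition alpha :: "('a::finite \<Rightarrow> 'a \<Rightarrow> bool) \<Rightarrow> ('a \<Rightarrow> real) \<Rightarrow> real" where
  "alpha E w = Max {(\<Sum>i\<in>I. w i) | I. independent_set E I}"

text \<open>Square complex matrices of dimension d are functions nat => nat => complex,
  of which only the entries with indices < d matter.\<close>

datatype pauli = PI | PX | PY | PZ

fun pauli_entry :: "pauli \<Rightarrow> nat \<Rightarrow> nat \<Rightarrow> complex" where
  "pauli_entry PI r c = (if r = c then 1 else 0)"
| "pauli_entry PX r c = (if r \<noteq> c then 1 else 0)"
| "pauli_entry PY r c = (if r = 0 \<and> c = 1 then - \<i> else if r = 1 \<and> c = 0 then \<i> else 0)"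
| "pauli_entry PZ r c = (if r = c then (if r = 0 then 1 else -1) else 0)"

text \<open>Tensor product of the Pauli matrices in a string p, a 2^(length p)
  square matrix; the k-th tensor factor acts on bit k of the index.\<close>
definition pauli_mat :: "pauli list \<Rightarrow> nat \<Rightarrow> nat \<Rightarrow> complex" where
  "pauli_mat p r c = (\<Prod>k<length p. pauli_entry (p ! k) ((r div 2 ^ k) mod 2) ((c div 2 ^ k) mod 2))"

definition mat_mult :: "nat \<Rightarrow> (nat \<Rightarrow> nat \<Rightarrow> complex) \<Rightarrow> (nat \<Rightarrow> nat \<Rightarrow> complex) \<Rightarrow> nat \<Rightarrow> nat \<Rightarrow> complex" where
  "mat_mult d A B i j = (\<Sum>k<d. A i k * B k j)"

definition mtrace :: "nat \<Rightarrow> (nat \<Rightarrow> nat \<Rightarrow> complex) \<Rightarrow> complex" where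
  "mtrace d A = (\<Sum>i<d. A i i)"

definition mats_commute :: "nat \<Rightarrow> (nat \<Rightarrow> nat \<Rightarrow> complex) \<Rightarrow> (nat \<Rightarrow> nat \<Rightarrow> complex) \<Rightarrow> bool" where
  "mats_commute d A B \<longleftrightarrow> (\<forall>i<d. \<forall>j<d. mat_mult d A B i j = mat_mult d B A i j)"

definition mats_anticommute :: "nat \<Rightarrow> (nat \<Rightarrow> nat \<Rightarrow> complex) \<Rightarrow> (nat \<Rightarrow> nat \<Rightarrow> complex) \<Rightarrow> bool" where
  "mats_anticommute d A B \<longleftrightarrow> (\<forall>i<d. \<forall>j<d. mat_mult d A B i j = - mat_mult d B A i j)"

definition density_matrix :: "nat \<Rightarrow> (nat \<Rightarrow> nat \<Rightarrow> complex) \<Rightarrow> bool" where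
  "density_matrix d \<rho> \<longleftrightarrow>
     (\<forall>i<d. \<forall>j<d. \<rho> i j = cnj (\<rho> j i))
     \<and> (\<forall>v :: nat \<Rightarrow> complex. 0 \<le> Re (\<Sum>i<d. \<Sum>j<d. cnj (v i) * \<rho> i j * v j))
     \<and> mtrace d \<rho> = 1"

definition realization :: "('a \<Rightarrow> 'a \<Rightarrow> bool) \<Rightarrow> nat \<Rightarrow> ('a \<Rightarrow> pauli list) \<Rightarrow> bool" where
  "realization E m S \<longleftrightarrow> (\<forall>v. length (S v) = m) \<and>
     (\<forall>u v. u \<noteq> v \<longrightarrow>
        (E u v \<longrightarrow> mats_anticommute (2 ^ m) (pauli_mat (S u)) (pauli_mat (S v))) \<and>
        (\<not> E u v \<longrightarrow> mats_commute (2 ^ m) (pauli_mat (S u)) (pauli_mat (S v))))"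

text \<open>beta(G,w), computed with respect to a (chosen) realization; the value
  tr(rho S_i) is real, so we take its real part.\<close>
definition beta :: "('a::finite \<Rightarrow> 'a \<Rightarrow> bool) \<Rightarrow> ('a \<Rightarrow> real) \<Rightarrow> real" where
  "beta E w = (case (SOME mS. realization E (fst mS) (snd mS)) of (m, S) \<Rightarrow>
     (SUP \<rho> \<in> {\<rho>. density_matrix (2 ^ m) \<rho>}.
        (\<Sum>i\<in>UNIV. w i * (Re (mtrace (2 ^ m) (mat_mult (2 ^ m) \<rho> (pauli_mat (S i))))) ^ 2)))"

definition hbar_perfect :: "('a::finite \<Rightarrow> 'a \<Rightarrow> bool) \<Rightarrow> bool" where
  "hbar_perfect E \<longleftrightarrow> (\<forall>w. (\<forall>i. 0 \<le> w i) \<longrightarrow> beta E w = alpha E w)"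

end

theory Submission
  imports Defs
begin

text \<open>Fix a realization \<open>S\<^sub>v\<close> and a state \<open>\<rho>\<close>, and put \<open>x\<^sub>v = tr(\<rho> S\<^sub>v)\<^sup>2\<close>.
  Pairwise anticommuting Hermitian unitaries \<open>T\<^sub>i\<close> satisfy \<open>(\<Sum> c\<^sub>i T\<^sub>i)\<^sup>2 = \<Sum> c\<^sub>i\<^sup>2\<close>,
  whence \<open>\<Sum> tr(\<rho> T\<^sub>i)\<^sup>2 \<le> 1\<close>: the vector \<open>x\<close> obeys the clique inequalities. Along an odd
  cycle of length \<open>2a+1\<close> the sum of the \<open>x\<^sub>v\<close> is at most \<open>a\<close>, by induction on \<open>a\<close>: a chord
  splits off a triangle or an anticommuting pair and leaves a shorter odd cycle; without chords
  near \<open>t\<^sub>0 t\<^sub>1 t\<^sub>2\<close>, the product \<open>t\<^sub>0 t\<^sub>2\<close> replaces the three of them, at the cost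
  \<open>x\<^sub>0 + x\<^sub>1 + x\<^sub>2 \<le> 1 + tr(\<rho> t\<^sub>0 t\<^sub>2)\<^sup>2\<close>. So for an h-perfect graph \<open>x \<in> STAB(G)\<close>, and
  \<open>\<beta> \<le> \<alpha>\<close>. Conversely, the strings of an independent set commute, and a common
  eigenprojection with positive trace, normalized, is a state in which each of them has
  expectation \<open>\<plusminus>1\<close>; hence \<open>\<beta> \<ge> \<alpha>\<close>.\<close>

section \<open>States on algebras with involution\<close>

definition commute :: "'a::times \<Rightarrow> 'a \<Rightarrow> bool" where
  "commute x y \<longleftrightarrow> x * y = y * x"

definition anticommute :: "'a::{times,uminus} \<Rightarrow> 'a \<Rightarrow> bool" where
  "anticommute x y \<longleftrightarrow> x * y = - (y * x)"

lemma commute_refl: "commute x x"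
  by (simp add: commute_def)

lemma commute_sym: "commute x y \<Longrightarrow> commute y x"
  by (simp add: commute_def)

lemma anticommute_sym: "anticommute x y \<Longrightarrow> anticommute y x"
  for x y :: "'a::ring"
  by (simp add: anticommute_def)

context
  fixes a c x :: "'a::ring"
begin

lemma commute_mult_left: "commute a x \<Longrightarrow> commute c x \<Longrightarrow> commute (a * c) x"
  by (simp add: commute_def) (metis mult.assoc)

lemma commute_mult_left_anti_anti: "anticommute a x \<Longrightarrow> anticommute c x \<Longrightarrow> commute (a * c) x"
  by (simp add: commute_def anticommute_def) (metis mult.assoc mult_minus_left mult_minus_right minus_minus)

lemma anticommute_mult_left_anti_comm: "anticommute a x \<Longrightarrow> commute c x \<Longrightarrow> anticommute (a * c) x"
  by (simp add: commute_def anticommute_def) (metis mult.assoc mult_minus_left mult_minus_right)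

lemma anticommute_mult_left_comm_anti: "commute a x \<Longrightarrow> anticommute c x \<Longrightarrow> anticommute (a * c) x"
  by (simp add: commute_def anticommute_def) (metis mult.assoc mult_minus_left mult_minus_right)

lemma commute_or_anticommute_mult:
  "commute a x \<or> anticommute a x \<Longrightarrow> commute c x \<or> anticommute c x
    \<Longrightarrow> commute (a * c) x \<or> anticommute (a * c) x"
  using commute_mult_left commute_mult_left_anti_anti anticommute_mult_left_anti_comm anticommute_mult_left_comm_anti
  by blast

end

lemma sum_sq_le_sq_if_directional_bound:
  fixes u v w :: real
  assumes "\<And>\<alpha> \<beta>. \<alpha>\<^sup>2 + \<beta>\<^sup>2 = 1 \<Longrightarrow> \<alpha> * u + \<beta> * v \<le> w"
  shows "u\<^sup>2 + v\<^sup>2 \<le> w\<^sup>2"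
proof (cases "u\<^sup>2 + v\<^sup>2 = 0")
  case True
  then show ?thesis by simp
next
  case False
  define n where "n = sqrt (u\<^sup>2 + v\<^sup>2)"
  have "0 < u\<^sup>2 + v\<^sup>2"
    using False by (metis add_nonneg_nonneg zero_le_power2 order_le_neq_trans)
  then have "0 < n" "n\<^sup>2 = u\<^sup>2 + v\<^sup>2"
    by (simp_all add: n_def)
  then have "(u / n)\<^sup>2 + (v / n)\<^sup>2 = 1"
    using False by (simp add: power_divide add_divide_distrib[symmetric])
  from assms[OF this] have "(u\<^sup>2 + v\<^sup>2) / n \<le> w"
    by (simp add: power2_eq_square add_divide_distrib)
  moreover have "(u\<^sup>2 + v\<^sup>2) / n = n"
    using \<open>0 < n\<close> by (simp flip: \<open>n\<^sup>2 = u\<^sup>2 + v\<^sup>2\<close>) (simp add: power2_eq_square)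
  ultimately have "n \<le> w"
    by simp
  with \<open>0 < n\<close> \<open>n\<^sup>2 = u\<^sup>2 + v\<^sup>2\<close> show ?thesis
    by (metis power_mono less_imp_le)
qed

text \<open>The matrices of all sizes live in one algebra without unit (type \<open>fmat\<close> below);
  \<open>e\<close> stands for the identity matrix of the size at hand.\<close>

locale star_corner =
  fixes e :: "'m::real_algebra" and adj :: "'m \<Rightarrow> 'm"
  assumes adj_linear: "linear adj"
    and adj_mult: "adj (x * y) = adj y * adj x"
    and adj_e: "adj e = e"
    and e_idem: "e * e = e"
begin

lemmas adj_add = linear_add[OF adj_linear]
  and adj_diff = linear_diff[OF adj_linear]
  and adj_scale = linear_scale[OF adj_linear]
  and adj_sum = linear_sum[OF adj_linear]

definition hermitian_unitary :: "'m \<Rightarrow> bool" where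
  "hermitian_unitary x \<longleftrightarrow> adj x = x \<and> x * x = e \<and> e * x = x"

definition projection :: "'m \<Rightarrow> bool" where
  "projection P \<longleftrightarrow> adj P = P \<and> P * P = P \<and> e * P = P"

definition eigenprojection :: "real \<Rightarrow> 'm \<Rightarrow> 'm" where
  "eigenprojection \<sigma> q = (1/2) *\<^sub>R (e + \<sigma> *\<^sub>R q)"

lemma hermitian_unitaryD:
  assumes "hermitian_unitary x"
  shows "adj x = x" "x * x = e" "e * x = x" "x * e = x"
proof -
  show "adj x = x" "x * x = e" "e * x = x"
    using assms by (simp_all add: hermitian_unitary_def)
  then show "x * e = x"
    by (metis adj_e adj_mult)
qed

lemma projection_mult_e: "projection P \<Longrightarrow> P * e = P"
  by (metis adj_e adj_mult projection_def)

lemma hermitian_unitary_mult: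
  assumes a: "hermitian_unitary a" and c: "hermitian_unitary c" and "commute a c"
  shows "hermitian_unitary (a * c)"
proof -
  have ca: "c * a = a * c"
    using \<open>commute a c\<close> by (simp add: commute_def)
  have "a * c * (a * c) = (a * a) * (c * c)"
    by (metis ca mult.assoc)
  then show ?thesis
    using hermitian_unitaryD[OF a] hermitian_unitaryD[OF c] e_idem
    by (simp add: hermitian_unitary_def adj_mult ca flip: mult.assoc)
qed

lemma hermitian_unitary_combination:
  assumes a: "hermitian_unitary a" and b: "hermitian_unitary b" and "anticommute a b"
    and "\<alpha>\<^sup>2 + \<beta>\<^sup>2 = 1"
  shows "hermitian_unitary (\<alpha> *\<^sub>R a + \<beta> *\<^sub>R b)"
proof -
  have "(\<alpha> *\<^sub>R a + \<beta> *\<^sub>R b) * (\<alpha> *\<^sub>R a + \<beta> *\<^sub>R b)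
      = (\<alpha>\<^sup>2 + \<beta>\<^sup>2) *\<^sub>R e + (\<alpha> * \<beta>) *\<^sub>R (a * b + b * a)"
    using hermitian_unitaryD[OF a] hermitian_unitaryD[OF b]
    by (simp add: algebra_simps power2_eq_square)
  then show ?thesis
    using hermitian_unitaryD[OF a] hermitian_unitaryD[OF b] assms(3,4)
    by (simp add: hermitian_unitary_def anticommute_def adj_add adj_scale algebra_simps)
qed

lemma anticommuting_combination_square:
  assumes "finite F" "\<forall>i\<in>F. hermitian_unitary (t i)"
    and "\<forall>i\<in>F. \<forall>j\<in>F. i \<noteq> j \<longrightarrow> anticommute (t i) (t j)"
  shows "(\<Sum>i\<in>F. c i *\<^sub>R t i) * (\<Sum>i\<in>F. c i *\<^sub>R t i) = (\<Sum>i\<in>F. (c i)\<^sup>2) *\<^sub>R e"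
  using assms
proof (induction F rule: finite_induct)
  case empty
  then show ?case by simp
next
  case (insert x F)
  define A where "A = (\<Sum>i\<in>F. c i *\<^sub>R t i)"
  have x: "hermitian_unitary (t x)"
    using insert.prems by simp
  have "t x * A = (\<Sum>i\<in>F. - (c i *\<^sub>R (t i * t x)))"
    unfolding A_def sum_distrib_left
    using insert.prems insert.hyps(2) by (intro sum.cong) (auto simp: anticommute_def)
  then have anti: "t x * A = - (A * t x)"
    by (simp add: A_def sum_distrib_right sum_negf)
  have "(c x *\<^sub>R t x + A) * (c x *\<^sub>R t x + A)
      = (c x)\<^sup>2 *\<^sub>R (t x * t x) + c x *\<^sub>R (t x * A + A * t x) + A * A"
    by (simp add: algebra_simps power2_eq_square)
  also have "\<dots> = (c x)\<^sup>2 *\<^sub>R e + (\<Sum>i\<in>F. (c i)\<^sup>2) *\<^sub>R e"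
    using insert.IH insert.prems hermitian_unitaryD(2)[OF x] by (simp add: anti flip: A_def)
  finally have "(c x *\<^sub>R t x + A) * (c x *\<^sub>R t x + A) = (c x)\<^sup>2 *\<^sub>R e + (\<Sum>i\<in>F. (c i)\<^sup>2) *\<^sub>R e" .
  then show ?case
    using insert.hyps by (simp add: A_def scaleR_add_left)
qed

lemma
  assumes q: "hermitian_unitary q" and \<sigma>: "\<sigma> \<in> {-1, 1}"
  shows projection_eigenprojection: "projection (eigenprojection \<sigma> q)"
    and mult_eigenprojection: "q * eigenprojection \<sigma> q = \<sigma> *\<^sub>R eigenprojection \<sigma> q"
proof -
  note q_props = hermitian_unitaryD[OF q]
  from \<sigma> have \<sigma>_cases: "\<sigma> = -1 \<or> \<sigma> = 1"
    by simp
  then have "(e + \<sigma> *\<^sub>R q) * (e + \<sigma> *\<^sub>R q) = 2 *\<^sub>R (e + \<sigma> *\<^sub>R q)"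
    by (elim disjE) (simp_all add: q_props e_idem algebra_simps scaleR_2)
  then have "eigenprojection \<sigma> q * eigenprojection \<sigma> q = eigenprojection \<sigma> q"
    by (simp add: eigenprojection_def)
  then show "projection (eigenprojection \<sigma> q)"
    using q_props e_idem
    by (simp add: projection_def eigenprojection_def adj_add adj_scale adj_e algebra_simps)
  show "q * eigenprojection \<sigma> q = \<sigma> *\<^sub>R eigenprojection \<sigma> q"
    using \<sigma>_cases by (elim disjE) (simp_all add: q_props eigenprojection_def algebra_simps)
qed

lemma eigenprojection_add_opposite: "eigenprojection \<sigma> q + eigenprojection (- \<sigma>) q = e"
  by (simp add: eigenprojection_def flip: scaleR_add_right)

lemma projection_mult:
  assumes P: "projection P" and R: "projection R" and "commute P R"
  shows "projection (P * R)"
proof -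
  have "P * R * (P * R) = (P * P) * (R * R)" "e * (P * R) = (e * P) * R"
    using \<open>commute P R\<close> by (metis commute_def mult.assoc)+
  then show ?thesis
    using P R \<open>commute P R\<close> by (simp add: projection_def adj_mult commute_def)
qed

lemma commute_eigenprojections:
  "commute e q \<Longrightarrow> commute e r \<Longrightarrow> commute q r
    \<Longrightarrow> commute (eigenprojection \<sigma> q) (eigenprojection \<tau> r)"
  by (simp add: commute_def eigenprojection_def algebra_simps)

lemma commute_eigenprojection_left:
  "commute e x \<Longrightarrow> commute q x \<Longrightarrow> commute (eigenprojection \<sigma> q) x"
  by (simp add: commute_def eigenprojection_def algebra_simps)


text \<open>The image of an odd cycle of the graph under a realization.\<close>

definition anticommuting_cycle :: "'m list \<Rightarrow> bool" where
  "anticommuting_cycle ts \<longleftrightarrow> (\<forall>x\<in>set ts. hermitian_unitary x)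
     \<and> (\<forall>x\<in>set ts. \<forall>y\<in>set ts. commute x y \<or> anticommute x y)
     \<and> successively anticommute ts \<and> anticommute (last ts) (hd ts)"

lemma anticommuting_cycle_replace:
  assumes "anticommuting_cycle (xs @ rest)" "rest \<noteq> []" "hermitian_unitary x"
    and "\<forall>y\<in>set rest. commute x y \<or> anticommute x y"
    and "anticommute x (hd rest)" "anticommute (last rest) x"
  shows "anticommuting_cycle (x # rest)"
proof -
  have "\<forall>y\<in>set rest. commute y x \<or> anticommute y x"
    using assms(4) commute_sym anticommute_sym by blast
  then show ?thesis
    using assms commute_refl unfolding anticommuting_cycle_def
    by (auto simp: successively_append_iff successively_Cons)
qed

end

locale algebra_state = star_corner e adj
  for e :: "'m::real_algebra" and adj +
  fixes \<phi> :: "'m \<Rightarrow> real"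
  assumes phi_linear: "linear \<phi>"
    and phi_e: "\<phi> e = 1"
    and phi_adj_mult_self_nonneg: "0 \<le> \<phi> (adj x * x)"
begin

lemmas phi_add = linear_add[OF phi_linear]
  and phi_diff = linear_diff[OF phi_linear]
  and phi_scale = linear_scale[OF phi_linear]
  and phi_sum = linear_sum[OF phi_linear]

lemma phi_projection_nonneg: "projection P \<Longrightarrow> 0 \<le> \<phi> P"
  using phi_adj_mult_self_nonneg[of P] by (simp add: projection_def)

text \<open>With \<open>A = \<Sum> \<phi>(t\<^sub>i) t\<^sub>i\<close> and \<open>s\<close> the sum in question, \<open>A * A = s e\<close> and \<open>\<phi> A = s\<close>,
  so \<open>0 \<le> \<phi>((e - A)\<^sup>* (e - A)) = 1 - s\<close>.\<close>

lemma phi_anticommuting_sum_sq_le_1: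
  assumes "finite F" "\<forall>i\<in>F. hermitian_unitary (t i)"
    and "\<forall>i\<in>F. \<forall>j\<in>F. i \<noteq> j \<longrightarrow> anticommute (t i) (t j)"
  shows "(\<Sum>i\<in>F. (\<phi> (t i))\<^sup>2) \<le> 1"
proof -
  define A where "A = (\<Sum>i\<in>F. \<phi> (t i) *\<^sub>R t i)"
  define s where "s = (\<Sum>i\<in>F. (\<phi> (t i))\<^sup>2)"
  have t: "adj (t i) = t i" "e * t i = t i" "t i * e = t i" if "i \<in> F" for i
    using hermitian_unitaryD[of "t i"] assms(2) that by auto
  have "adj A = A" "e * A = A" "A * e = A"
    using t by (simp_all add: A_def adj_sum adj_scale sum_distrib_left sum_distrib_right)
  moreover have "A * A = s *\<^sub>R e"
    unfolding A_def s_def by (rule anticommuting_combination_square[OF assms])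
  moreover have "\<phi> A = s"
    by (simp add: A_def s_def phi_sum phi_scale power2_eq_square)
  ultimately have "\<phi> (adj (e - A) * (e - A)) = 1 - s"
    by (simp add: adj_diff adj_e e_idem algebra_simps phi_diff phi_add phi_scale phi_e)
  then show ?thesis
    using phi_adj_mult_self_nonneg[of "e - A"] by (simp add: s_def)
qed

lemma phi_anticommuting_pair_bound:
  assumes "hermitian_unitary x" "hermitian_unitary y" "anticommute x y"
  shows "(\<phi> x)\<^sup>2 + (\<phi> y)\<^sup>2 \<le> 1"
  using phi_anticommuting_sum_sq_le_1[of "{0, 1::nat}" "\<lambda>i. if i = 0 then x else y"]
    assms anticommute_sym[OF assms(3)] by auto

lemma phi_anticommuting_triangle_bound:
  assumes "hermitian_unitary x" "hermitian_unitary y" "hermitian_unitary z"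
    and "anticommute x y" "anticommute y z" "anticommute x z"
  shows "(\<phi> x)\<^sup>2 + (\<phi> y)\<^sup>2 + (\<phi> z)\<^sup>2 \<le> 1"
  using phi_anticommuting_sum_sq_le_1[of "{0, 1, 2::nat}" "\<lambda>i. if i = 0 then x else if i = 1 then y else z"]
    assms anticommute_sym[OF assms(4)] anticommute_sym[OF assms(5)] anticommute_sym[OF assms(6)]
  by auto

text \<open>The Hermitian unitaries \<open>Q = a c\<close> and \<open>A = \<alpha> a + \<beta> b\<close> commute, hence so do the projections
  \<open>(e + \<sigma> Q)/2\<close> and \<open>(e - A)/2\<close>; expanding \<open>\<phi>\<close> of their product, which is nonnegative,
  gives the claim.\<close>

lemma phi_triple_directional_bound:
  assumes a: "hermitian_unitary a" and b: "hermitian_unitary b" and c: "hermitian_unitary c"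
    and ab: "anticommute a b" and bc: "anticommute b c" and ac: "commute a c"
    and \<sigma>: "\<sigma> \<in> {-1, 1}" and \<alpha>\<beta>: "\<alpha>\<^sup>2 + \<beta>\<^sup>2 = 1"
  shows "\<alpha> * (\<phi> a + \<sigma> * \<phi> c) + \<beta> * (\<phi> b + \<sigma> * \<phi> (a * c * b)) \<le> 1 + \<sigma> * \<phi> (a * c)"
proof -
  define Q where "Q = a * c"
  define A where "A = \<alpha> *\<^sub>R a + \<beta> *\<^sub>R b"
  have Q: "hermitian_unitary Q"
    unfolding Q_def by (rule hermitian_unitary_mult[OF a c ac])
  have A: "hermitian_unitary A"
    unfolding A_def by (rule hermitian_unitary_combination[OF a b ab \<alpha>\<beta>])
  note a' = hermitian_unitaryD[OF a] and c' = hermitian_unitaryD[OF c]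
  have "Q * a = (a * a) * c" "a * Q = (a * a) * c"
    using ac by (metis Q_def commute_def mult.assoc)+
  then have Qa: "Q * a = c" "a * Q = c"
    using a' c' by simp_all
  have Qb: "Q * b = b * Q"
    using commute_mult_left_anti_anti[OF ab anticommute_sym[OF bc]] by (simp add: Q_def commute_def)
  have QA: "Q * A = \<alpha> *\<^sub>R c + \<beta> *\<^sub>R (a * c * b)"
    unfolding A_def using Qa(1) by (simp add: Q_def distrib_left)
  have "commute Q A"
    using Qa Qb by (simp add: commute_def A_def algebra_simps)
  then have "commute (eigenprojection \<sigma> Q) (eigenprojection (-1) A)"
    using hermitian_unitaryD[OF Q] hermitian_unitaryD[OF A]
    by (intro commute_eigenprojections) (simp_all add: commute_def)
  then have "0 \<le> \<phi> (eigenprojection \<sigma> Q * eigenprojection (-1) A)"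
    by (intro phi_projection_nonneg projection_mult projection_eigenprojection Q A \<sigma>) simp
  moreover have "eigenprojection \<sigma> Q * eigenprojection (-1) A
      = (1/4) *\<^sub>R (e - A + \<sigma> *\<^sub>R Q - \<sigma> *\<^sub>R (Q * A))"
    using hermitian_unitaryD[OF Q] hermitian_unitaryD[OF A] e_idem
    by (simp add: eigenprojection_def algebra_simps)
  then have "\<phi> (eigenprojection \<sigma> Q * eigenprojection (-1) A)
      = (1 - \<phi> A + \<sigma> * \<phi> Q - \<sigma> * \<phi> (Q * A)) / 4"
    by (simp add: phi_diff phi_add phi_scale phi_e)
  ultimately have "0 \<le> 1 - \<phi> A + \<sigma> * \<phi> Q - \<sigma> * \<phi> (\<alpha> *\<^sub>R c + \<beta> *\<^sub>R (a * c * b))"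
    by (simp add: QA)
  then show ?thesis
    by (simp add: A_def Q_def phi_add phi_scale algebra_simps)
qed

lemma phi_triple_bound:
  assumes "hermitian_unitary a" "hermitian_unitary b" "hermitian_unitary c"
    and "anticommute a b" "anticommute b c" "commute a c"
  shows "(\<phi> a)\<^sup>2 + (\<phi> b)\<^sup>2 + (\<phi> c)\<^sup>2 \<le> 1 + (\<phi> (a * c))\<^sup>2"
proof -
  note bound = phi_triple_directional_bound[OF assms]
  have "(\<phi> a + \<phi> c)\<^sup>2 + (\<phi> b + \<phi> (a * c * b))\<^sup>2 \<le> (1 + \<phi> (a * c))\<^sup>2"
    using bound[of 1] by (intro sum_sq_le_sq_if_directional_bound) simp
  moreover have "(\<phi> a - \<phi> c)\<^sup>2 + (\<phi> b - \<phi> (a * c * b))\<^sup>2 \<le> (1 - \<phi> (a * c))\<^sup>2"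
    using bound[of "-1"] by (intro sum_sq_le_sq_if_directional_bound) simp
  ultimately show ?thesis
    using zero_le_power2[of "\<phi> (a * c * b)"] unfolding power2_sum power2_diff power_one by linarith
qed

lemma phi_anticommuting_path_bound:
  "length ts = 2 * k \<Longrightarrow> \<forall>x\<in>set ts. hermitian_unitary x \<Longrightarrow> successively anticommute ts
    \<Longrightarrow> (\<Sum>x\<leftarrow>ts. (\<phi> x)\<^sup>2) \<le> real k"
proof (induction k arbitrary: ts)
  case 0
  then show ?case by simp
next
  case (Suc k)
  then obtain x y rest where ts: "ts = x # y # rest"
    by (metis length_0_conv length_Suc_conv mult_Suc_right add_2_eq_Suc nat.distinct(1))
  then have "(\<Sum>x\<leftarrow>rest. (\<phi> x)\<^sup>2) \<le> real k"
    using Suc by (auto simp: successively_Cons)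
  moreover have "(\<phi> x)\<^sup>2 + (\<phi> y)\<^sup>2 \<le> 1"
    using Suc.prems ts by (intro phi_anticommuting_pair_bound) auto
  ultimately show ?case
    using ts by simp
qed

lemma phi_anticommuting_cycle_bound:
  "anticommuting_cycle ts \<Longrightarrow> length ts = 2 * a + 1 \<Longrightarrow> 1 \<le> a \<Longrightarrow> (\<Sum>x\<leftarrow>ts. (\<phi> x)\<^sup>2) \<le> real a"
proof (induction a arbitrary: ts rule: less_induct)
  case (less a)
  note cycle = less.prems(1)[unfolded anticommuting_cycle_def]
  show ?case
  proof (cases "a = 1")
    case True
    with less.prems(2) have "length ts = Suc (Suc (Suc 0))"
      by simp
    then obtain x y z where "ts = [x, y, z]"
      by (auto simp: length_Suc_conv)
    moreover have "(\<phi> x)\<^sup>2 + (\<phi> y)\<^sup>2 + (\<phi> z)\<^sup>2 \<le> 1"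
      using cycle anticommute_sym[of z x] \<open>ts = [x, y, z]\<close>
      by (intro phi_anticommuting_triangle_bound) simp_all
    ultimately show ?thesis
      using True by simp
  next
    case False
    with less.prems(2,3) have "length ts = Suc (Suc (Suc (Suc (2 * a - 3))))"
      by simp
    then obtain t0 t1 t2 t3 rest' where "ts = t0 # t1 # t2 # t3 # rest'"
      by (auto simp: length_Suc_conv)
    define rest where "rest = t3 # rest'"
    have ts: "ts = [t0, t1, t2] @ rest" and "rest \<noteq> []" "hd rest = t3"
      by (simp_all add: \<open>ts = _\<close> rest_def)
    have hu: "hermitian_unitary t0" "hermitian_unitary t1" "hermitian_unitary t2"
        "\<forall>x\<in>set rest. hermitian_unitary x"
      and rel: "\<forall>x\<in>set rest. commute t0 x \<or> anticommute t0 x"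
        "\<forall>x\<in>set rest. commute t2 x \<or> anticommute t2 x"
        "commute t0 t2 \<or> anticommute t0 t2"
      and anti: "anticommute t0 t1" "anticommute t1 t2" "anticommute t2 t3"
        "successively anticommute rest" "anticommute (last rest) t0"
      using cycle by (simp_all add: ts rest_def)
    have shorter: "(\<phi> x)\<^sup>2 + (\<Sum>y\<leftarrow>rest. (\<phi> y)\<^sup>2) \<le> real (a - 1)"
      if "anticommuting_cycle (x # rest)" for x
      using less.IH[of "a - 1" "x # rest"] that False less.prems(2,3) by (simp add: ts)
    have split: "(\<Sum>x\<leftarrow>ts. (\<phi> x)\<^sup>2) = (\<phi> t0)\<^sup>2 + (\<phi> t1)\<^sup>2 + (\<phi> t2)\<^sup>2 + (\<Sum>x\<leftarrow>rest. (\<phi> x)\<^sup>2)"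
      by (simp add: ts)
    note replace = anticommuting_cycle_replace[OF less.prems(1)[unfolded ts] \<open>rest \<noteq> []\<close>]
    have "t3 \<in> set rest" "last rest \<in> set rest"
      using \<open>rest \<noteq> []\<close> by (simp_all add: rest_def)
    then consider "anticommute t0 t2" | "anticommute t0 t3" | "anticommute t2 (last rest)"
      | "commute t0 t2" "commute t0 t3" "commute t2 (last rest)"
      using rel by blast
    then show ?thesis
    proof cases
      case 1
      then have "(\<phi> t0)\<^sup>2 + (\<phi> t1)\<^sup>2 + (\<phi> t2)\<^sup>2 \<le> 1"
        by (rule phi_anticommuting_triangle_bound[OF hu(1-3) anti(1,2)])
      moreover have "(\<Sum>x\<leftarrow>rest. (\<phi> x)\<^sup>2) \<le> real (a - 1)"
        using less.prems(2) hu(4) anti(4) by (intro phi_anticommuting_path_bound) (simp_all add: ts)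
      ultimately show ?thesis
        using split less.prems(3) by simp
    next
      case 2
      then have "(\<phi> t0)\<^sup>2 + (\<Sum>y\<leftarrow>rest. (\<phi> y)\<^sup>2) \<le> real (a - 1)"
        using hu(1) rel(1) anti(5) \<open>hd rest = t3\<close> by (intro shorter replace) simp_all
      moreover have "(\<phi> t1)\<^sup>2 + (\<phi> t2)\<^sup>2 \<le> 1"
        by (rule phi_anticommuting_pair_bound[OF hu(2,3) anti(2)])
      ultimately show ?thesis
        using split less.prems(3) by simp
    next
      case 3
      then have "(\<phi> t2)\<^sup>2 + (\<Sum>y\<leftarrow>rest. (\<phi> y)\<^sup>2) \<le> real (a - 1)"
        using hu(3) rel(2) anti(3) \<open>hd rest = t3\<close> anticommute_sym
        by (intro shorter replace) simp_all
      moreover have "(\<phi> t0)\<^sup>2 + (\<phi> t1)\<^sup>2 \<le> 1"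
        by (rule phi_anticommuting_pair_bound[OF hu(1,2) anti(1)])
      ultimately show ?thesis
        using split less.prems(3) by simp
    next
      case 4
      \<comment> \<open>Replace the triangle by the product of its ends, which closes the shorter cycle.\<close>
      have "anticommute (t0 * t2) t3" "anticommute (t0 * t2) (last rest)"
        using anticommute_mult_left_comm_anti[OF 4(2) anti(3)]
          anticommute_mult_left_anti_comm[OF anticommute_sym[OF anti(5)] 4(3)] .
      then have "(\<phi> (t0 * t2))\<^sup>2 + (\<Sum>y\<leftarrow>rest. (\<phi> y)\<^sup>2) \<le> real (a - 1)"
        using hermitian_unitary_mult[OF hu(1,3) 4(1)] rel(1,2) \<open>hd rest = t3\<close>
        by (intro shorter replace) (simp_all add: commute_or_anticommute_mult anticommute_sym)
      moreover have "(\<phi> t0)\<^sup>2 + (\<phi> t1)\<^sup>2 + (\<phi> t2)\<^sup>2 \<le> 1 + (\<phi> (t0 * t2))\<^sup>2"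
        by (rule phi_triple_bound[OF hu(1-3) anti(1,2) 4(1)])
      ultimately show ?thesis
        using split less.prems(3) False by simp
    qed
  qed
qed

lemma eigenprojection_refinement:
  assumes t: "hermitian_unitary t" and P: "projection P" "0 < \<phi> P" and "commute t P"
  shows "\<exists>\<sigma>\<in>{-1, 1}. projection (eigenprojection \<sigma> t * P) \<and> 0 < \<phi> (eigenprojection \<sigma> t * P)"
proof -
  have "commute e P"
    using P(1) projection_mult_e by (simp add: commute_def projection_def)
  then have proj: "projection (eigenprojection \<sigma> t * P)" if "\<sigma> \<in> {-1, 1}" for \<sigma>
    using t that P(1) commute_eigenprojection_left[OF _ \<open>commute t P\<close>]
    by (intro projection_mult projection_eigenprojection)
  have "eigenprojection 1 t * P + eigenprojection (-1) t * P = P"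
    using eigenprojection_add_opposite[of 1 t] P(1) by (simp add: projection_def flip: distrib_right)
  then have "\<phi> (eigenprojection 1 t * P) + \<phi> (eigenprojection (-1) t * P) = \<phi> P"
    by (metis phi_add)
  moreover have "0 \<le> \<phi> (eigenprojection 1 t * P)" "0 \<le> \<phi> (eigenprojection (-1) t * P)"
    using proj by (simp_all add: phi_projection_nonneg)
  ultimately have "0 < \<phi> (eigenprojection 1 t * P) \<or> 0 < \<phi> (eigenprojection (-1) t * P)"
    using P(2) by linarith
  then show ?thesis
    using proj by auto
qed

text \<open>The last conjunct is the invariant that keeps the next generator commuting with P.\<close>

lemma joint_eigenprojection:
  assumes "finite T" "\<forall>t\<in>T. hermitian_unitary t" "\<forall>t\<in>T. \<forall>u\<in>T. commute t u"
  shows "\<exists>P. projection P \<and> 0 < \<phi> P \<and> (\<forall>t\<in>T. t * P = P \<or> t * P = - P)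
           \<and> (\<forall>x. commute e x \<and> (\<forall>t\<in>T. commute t x) \<longrightarrow> commute P x)"
  using assms
proof (induction T rule: finite_induct)
  case empty
  show ?case
    by (intro exI[of _ e]) (simp add: projection_def adj_e e_idem phi_e)
next
  case (insert t T)
  then obtain P where P: "projection P" "0 < \<phi> P" "\<forall>u\<in>T. u * P = P \<or> u * P = - P"
    and P_comm: "\<forall>x. commute e x \<and> (\<forall>u\<in>T. commute u x) \<longrightarrow> commute P x"
    by auto
  have t: "hermitian_unitary t"
    using insert.prems by simp
  have "commute e t"
    using hermitian_unitaryD[OF t] by (simp add: commute_def)
  then have "commute t P"
    using P_comm insert.prems(2) by (blast intro: commute_sym)
  then obtain \<sigma> where \<sigma>: "\<sigma> \<in> {-1, 1}" and P': "projection (eigenprojection \<sigma> t * P)"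
      "0 < \<phi> (eigenprojection \<sigma> t * P)"
    using eigenprojection_refinement[OF t P(1,2)] by blast
  have "u * (eigenprojection \<sigma> t * P) = eigenprojection \<sigma> t * P
      \<or> u * (eigenprojection \<sigma> t * P) = - (eigenprojection \<sigma> t * P)" if "u \<in> insert t T" for u
  proof (cases "u = t")
    case True
    then have "u * (eigenprojection \<sigma> t * P) = \<sigma> *\<^sub>R (eigenprojection \<sigma> t * P)"
      by (simp add: mult_eigenprojection[OF t \<sigma>] flip: mult.assoc)
    then show ?thesis
      using \<sigma> by (cases "\<sigma> = 1") simp_all
  next
    case False
    with that have "u \<in> T"
      by simp
    have "commute e u"
      using hermitian_unitaryD[of u] insert.prems(1) \<open>u \<in> T\<close> by (simp add: commute_def)
    moreover have "commute t u"
      using insert.prems(2) \<open>u \<in> T\<close> by blast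
    ultimately have "commute (eigenprojection \<sigma> t) u"
      by (rule commute_eigenprojection_left)
    then have "u * (eigenprojection \<sigma> t * P) = eigenprojection \<sigma> t * (u * P)"
      by (simp add: commute_def flip: mult.assoc)
    then show ?thesis
      using P(3) \<open>u \<in> T\<close> by auto
  qed
  moreover have "commute (eigenprojection \<sigma> t * P) x"
    if "commute e x" "\<forall>u\<in>insert t T. commute u x" for x
    using that P_comm by (simp add: commute_mult_left commute_eigenprojection_left)
  ultimately show ?case
    using P' by blast
qed

end

section \<open>Finitely supported complex matrices\<close>

typedef fmat = "{A :: nat \<Rightarrow> nat \<Rightarrow> complex. \<exists>N. \<forall>i j. N \<le> i \<or> N \<le> j \<longrightarrow> A i j = 0}"
  morphisms entry Abs_fmat
  by (rule exI[of _ "\<lambda>i j. 0"]) auto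

setup_lifting type_definition_fmat

lemma finite_support_entrywise:
  fixes A B :: "nat \<Rightarrow> nat \<Rightarrow> complex"
  assumes "\<exists>N. \<forall>i j. N \<le> i \<or> N \<le> j \<longrightarrow> A i j = 0" "\<exists>N. \<forall>i j. N \<le> i \<or> N \<le> j \<longrightarrow> B i j = 0"
    and "f 0 0 = 0"
  shows "\<exists>N. \<forall>i j. N \<le> i \<or> N \<le> j \<longrightarrow> f (A i j) (B i j) = 0"
proof -
  obtain N M where "\<forall>i j. N \<le> i \<or> N \<le> j \<longrightarrow> A i j = 0" "\<forall>i j. M \<le> i \<or> M \<le> j \<longrightarrow> B i j = 0"
    using assms(1,2) by blast
  then show ?thesis
    using assms(3) by (intro exI[of _ "max N M"]) auto
qed

definition support_bound :: "fmat \<Rightarrow> nat" where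
  "support_bound A = (SOME N. \<forall>i j. N \<le> i \<or> N \<le> j \<longrightarrow> entry A i j = 0)"

lemma entry_beyond_support_bound:
  "support_bound A \<le> i \<or> support_bound A \<le> j \<Longrightarrow> entry A i j = 0"
proof -
  have "\<exists>N. \<forall>i j. N \<le> i \<or> N \<le> j \<longrightarrow> entry A i j = 0"
    using entry[of A] by simp
  then have "\<forall>i j. support_bound A \<le> i \<or> support_bound A \<le> j \<longrightarrow> entry A i j = 0"
    unfolding support_bound_def by (rule someI_ex)
  then show "support_bound A \<le> i \<or> support_bound A \<le> j \<Longrightarrow> entry A i j = 0"
    by blast
qed

lemma fmat_eqI: "(\<And>i j. entry A i j = entry B i j) \<Longrightarrow> A = B"
  by (metis entry_inject ext)

instantiation fmat :: real_algebra
begin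

lift_definition zero_fmat :: fmat is "\<lambda>i j. 0" by auto

lift_definition plus_fmat :: "fmat \<Rightarrow> fmat \<Rightarrow> fmat" is "\<lambda>A B i j. A i j + B i j"
  by (rule finite_support_entrywise) auto

lift_definition minus_fmat :: "fmat \<Rightarrow> fmat \<Rightarrow> fmat" is "\<lambda>A B i j. A i j - B i j"
  by (rule finite_support_entrywise) auto

lift_definition uminus_fmat :: "fmat \<Rightarrow> fmat" is "\<lambda>A i j. - A i j" by auto

lift_definition scaleR_fmat :: "real \<Rightarrow> fmat \<Rightarrow> fmat" is "\<lambda>r A i j. complex_of_real r * A i j"
  by auto

definition times_fmat :: "fmat \<Rightarrow> fmat \<Rightarrow> fmat" where
  "A * B = Abs_fmat (\<lambda>i j. \<Sum>k<support_bound A. entry A i k * entry B k j)"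

lemma entry_times_eq: "entry (A * B) i j = (\<Sum>k<support_bound A. entry A i k * entry B k j)"
proof -
  let ?N = "max (support_bound A) (support_bound B)"
  have "(\<Sum>k<support_bound A. entry A i k * entry B k j) = 0" if "?N \<le> i \<or> ?N \<le> j" for i j
    using that by (intro sum.neutral) (auto simp: entry_beyond_support_bound)
  then have "entry (Abs_fmat (\<lambda>i j. \<Sum>k<support_bound A. entry A i k * entry B k j))
      = (\<lambda>i j. \<Sum>k<support_bound A. entry A i k * entry B k j)"
    by (intro Abs_fmat_inverse CollectI exI[of _ ?N] allI impI)
  then show ?thesis
    by (simp add: times_fmat_def)
qed

lemma entry_times:
  assumes "\<forall>i k. N \<le> k \<longrightarrow> entry A i k = 0"
  shows "entry (A * B) i j = (\<Sum>k<N. entry A i k * entry B k j)"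
proof -
  let ?b = "support_bound A"
  have "(\<Sum>k<?b. entry A i k * entry B k j) = (\<Sum>k<max N ?b. entry A i k * entry B k j)"
    by (rule sum.mono_neutral_left) (auto simp: entry_beyond_support_bound)
  also have "\<dots> = (\<Sum>k<N. entry A i k * entry B k j)"
    by (rule sum.mono_neutral_right) (use assms in auto)
  finally show ?thesis
    by (simp add: entry_times_eq)
qed

lemma entry_times_support_bound:
  "support_bound A \<le> N \<Longrightarrow> entry (A * B) i j = (\<Sum>k<N. entry A i k * entry B k j)"
  by (rule entry_times) (auto intro: entry_beyond_support_bound)

instance
proof
  fix a b c :: fmat and r s :: real
  define N where "N = Max {support_bound a, support_bound b, support_bound (a * b),
    support_bound (a + b), support_bound (r *\<^sub>R a)}"
  have N: "support_bound a \<le> N" "support_bound b \<le> N" "support_bound (a * b) \<le> N"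
    "support_bound (a + b) \<le> N" "support_bound (r *\<^sub>R a) \<le> N"
    by (simp_all add: N_def)
  note times = entry_times_support_bound[OF N(1)] entry_times_support_bound[OF N(2)]
    entry_times_support_bound[OF N(3)] entry_times_support_bound[OF N(4)]
    entry_times_support_bound[OF N(5)]
  show "a * b * c = a * (b * c)"
  proof (rule fmat_eqI)
    fix i j
    have "entry (a * b * c) i j = (\<Sum>l<N. (\<Sum>k<N. entry a i k * entry b k l) * entry c l j)"
      by (simp only: times)
    also have "\<dots> = (\<Sum>k<N. entry a i k * (\<Sum>l<N. entry b k l * entry c l j))"
      unfolding sum_distrib_left sum_distrib_right by (subst sum.swap) (simp only: mult.assoc)
    also have "\<dots> = entry (a * (b * c)) i j"
      by (simp only: times)
    finally show "entry (a * b * c) i j = entry (a * (b * c)) i j" .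
  qed
  show "(a + b) * c = a * c + b * c"
    by (rule fmat_eqI) (simp add: times plus_fmat.rep_eq distrib_right sum.distrib)
  show "a * (b + c) = a * b + a * c"
    by (rule fmat_eqI) (simp add: times plus_fmat.rep_eq distrib_left sum.distrib)
  show "r *\<^sub>R a * b = r *\<^sub>R (a * b)"
    by (rule fmat_eqI) (simp add: times scaleR_fmat.rep_eq sum_distrib_left mult.assoc)
  show "a * r *\<^sub>R b = r *\<^sub>R (a * b)"
    by (rule fmat_eqI) (simp add: times scaleR_fmat.rep_eq sum_distrib_left mult.left_commute)
qed (rule fmat_eqI; simp add: plus_fmat.rep_eq minus_fmat.rep_eq uminus_fmat.rep_eq
    zero_fmat.rep_eq scaleR_fmat.rep_eq algebra_simps)+

end

lift_definition fmat_adjoint :: "fmat \<Rightarrow> fmat" is "\<lambda>A i j. cnj (A j i)"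
  by (metis complex_cnj_zero)

lift_definition fmat_of :: "nat \<Rightarrow> (nat \<Rightarrow> nat \<Rightarrow> complex) \<Rightarrow> fmat" is
  "\<lambda>d A i j. if i < d \<and> j < d then A i j else 0"
  by (metis not_le)

definition fmat_id :: "nat \<Rightarrow> fmat" where
  "fmat_id d = fmat_of d (\<lambda>i j. if i = j then 1 else 0)"

lemma fmat_of_eq_iff: "fmat_of d A = fmat_of d B \<longleftrightarrow> (\<forall>i<d. \<forall>j<d. A i j = B i j)"
proof
  assume "fmat_of d A = fmat_of d B"
  then have "entry (fmat_of d A) i j = entry (fmat_of d B) i j" for i j
    by simp
  then show "\<forall>i<d. \<forall>j<d. A i j = B i j"
    unfolding fmat_of.rep_eq by (metis (full_types))
qed (intro fmat_eqI, simp add: fmat_of.rep_eq)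

lemma entry_fmat_of_beyond: "\<forall>i k. d \<le> k \<longrightarrow> entry (fmat_of d A) i k = 0"
  by (simp add: fmat_of.rep_eq)

lemma fmat_of_mult: "fmat_of d A * fmat_of d B = fmat_of d (mat_mult d A B)"
  by (rule fmat_eqI) (auto simp: entry_times[OF entry_fmat_of_beyond] fmat_of.rep_eq mat_mult_def)

lemma fmat_of_uminus: "- fmat_of d A = fmat_of d (\<lambda>i j. - A i j)"
  by (rule fmat_eqI) (simp add: fmat_of.rep_eq uminus_fmat.rep_eq)

lemma fmat_adjoint_fmat_of: "fmat_adjoint (fmat_of d A) = fmat_of d (\<lambda>i j. cnj (A j i))"
  by (rule fmat_eqI) (simp add: fmat_of.rep_eq fmat_adjoint.rep_eq)

lemma mat_mult_id_left: "i < d \<Longrightarrow> mat_mult d (\<lambda>i j. if i = j then 1 else 0) A i j = A i j"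
  unfolding mat_mult_def by (subst sum.cong[OF refl, of _ _ "\<lambda>k. if k = i then A i j else 0"]) auto

lemma mat_mult_id_right: "j < d \<Longrightarrow> mat_mult d A (\<lambda>i j. if i = j then 1 else 0) i j = A i j"
  unfolding mat_mult_def by (subst sum.cong[OF refl, of _ _ "\<lambda>k. if k = j then A i j else 0"]) auto

lemma fmat_id_mult: "fmat_id d * fmat_of d A = fmat_of d A"
  by (simp add: fmat_id_def fmat_of_mult fmat_of_eq_iff mat_mult_id_left)

lemma fmat_id_idem: "fmat_id d * fmat_id d = fmat_id d"
  using fmat_id_mult[of d "\<lambda>i j. if i = j then 1 else 0"] by (simp add: fmat_id_def)

lemma fmat_adjoint_fmat_id: "fmat_adjoint (fmat_id d) = fmat_id d"
  by (simp add: fmat_id_def fmat_adjoint_fmat_of fmat_of_eq_iff)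

lemma fmat_adjoint_mult: "fmat_adjoint (A * B) = fmat_adjoint B * fmat_adjoint A"
proof (rule fmat_eqI)
  fix i j
  let ?N = "max (support_bound A) (support_bound (fmat_adjoint B))"
  have A: "\<forall>i k. ?N \<le> k \<longrightarrow> entry A i k = 0"
    and B: "\<forall>i k. ?N \<le> k \<longrightarrow> entry (fmat_adjoint B) i k = 0"
    by (simp_all add: entry_beyond_support_bound)
  show "entry (fmat_adjoint (A * B)) i j = entry (fmat_adjoint B * fmat_adjoint A) i j"
    by (simp add: fmat_adjoint.rep_eq entry_times[OF A] entry_times[OF B] mult.commute)
qed

lemma linear_fmat_adjoint: "linear fmat_adjoint"
  by (rule linearI; rule fmat_eqI) (simp_all add: fmat_adjoint.rep_eq plus_fmat.rep_eq scaleR_fmat.rep_eq)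

lemma star_corner_fmat: "star_corner (fmat_id d) fmat_adjoint"
  by (intro star_corner.intro linear_fmat_adjoint fmat_adjoint_mult fmat_adjoint_fmat_id
      fmat_id_idem)

interpretation fmat: star_corner "fmat_id d" fmat_adjoint for d
  by (rule star_corner_fmat)

definition expectation :: "nat \<Rightarrow> (nat \<Rightarrow> nat \<Rightarrow> complex) \<Rightarrow> (nat \<Rightarrow> nat \<Rightarrow> complex) \<Rightarrow> real" where
  "expectation d \<rho> A = Re (mtrace d (mat_mult d \<rho> A))"

lemma expectation_entry_fmat_of: "expectation d \<rho> (entry (fmat_of d A)) = expectation d \<rho> A"
  by (simp add: expectation_def mtrace_def mat_mult_def fmat_of.rep_eq)

lemma entry_fmat_adjoint_mult_self:
  "entry (fmat_adjoint X * X) i j = (\<Sum>l<support_bound X. cnj (entry X l i) * entry X l j)"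
proof -
  let ?N = "max (support_bound X) (support_bound (fmat_adjoint X))"
  have "\<forall>i k. ?N \<le> k \<longrightarrow> entry (fmat_adjoint X) i k = 0"
    by (simp add: entry_beyond_support_bound)
  then have "entry (fmat_adjoint X * X) i j = (\<Sum>l<?N. cnj (entry X l i) * entry X l j)"
    by (subst entry_times) (simp_all add: fmat_adjoint.rep_eq)
  also have "\<dots> = (\<Sum>l<support_bound X. cnj (entry X l i) * entry X l j)"
    by (rule sum.mono_neutral_right) (auto simp: entry_beyond_support_bound)
  finally show ?thesis .
qed

lemma quadratic_form_fmat_adjoint_mult_self_nonneg:
  "0 \<le> Re (\<Sum>i<d. \<Sum>j<d. cnj (v i) * entry (fmat_adjoint X * X) i j * v j)"
proof -
  define w where "w l = (\<Sum>j<d. entry X l j * v j)" for l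
  define F where "F l i j = cnj (entry X l i) * cnj (v i) * (entry X l j * v j)" for l i j
  let ?N = "support_bound X"
  have "(\<Sum>i<d. \<Sum>j<d. cnj (v i) * entry (fmat_adjoint X * X) i j * v j)
      = (\<Sum>i<d. \<Sum>j<d. \<Sum>l<?N. F l i j)"
    by (simp add: entry_fmat_adjoint_mult_self F_def sum_distrib_left sum_distrib_right mult_ac)
  also have "\<dots> = (\<Sum>i<d. \<Sum>l<?N. \<Sum>j<d. F l i j)"
    by (rule sum.cong[OF refl], rule sum.swap)
  also have "\<dots> = (\<Sum>l<?N. \<Sum>i<d. \<Sum>j<d. F l i j)"
    by (rule sum.swap)
  also have "\<dots> = (\<Sum>l<?N. cnj (w l) * w l)"
    by (simp add: F_def w_def sum_product)
  also have "\<dots> = of_real (\<Sum>l<support_bound X. (cmod (w l))\<^sup>2)"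
    unfolding of_real_sum by (rule sum.cong[OF refl]) (metis complex_norm_square mult.commute)
  finally show ?thesis
    by (simp add: sum_nonneg)
qed

lemma expectation_adjoint_mult_self_nonneg:
  assumes \<rho>: "density_matrix d \<rho>"
  shows "0 \<le> expectation d \<rho> (entry (fmat_adjoint X * X))"
proof -
  let ?N = "support_bound X"
  define G where "G l i k = entry X l i * \<rho> i k * cnj (entry X l k)" for l i k
  have "(\<Sum>i<d. \<Sum>k<d. \<rho> i k * entry (fmat_adjoint X * X) k i) = (\<Sum>i<d. \<Sum>k<d. \<Sum>l<?N. G l i k)"
    unfolding entry_fmat_adjoint_mult_self G_def by (simp add: sum_distrib_left mult_ac)
  also have "\<dots> = (\<Sum>i<d. \<Sum>l<?N. \<Sum>k<d. G l i k)"
    by (rule sum.cong[OF refl], rule sum.swap)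
  also have "\<dots> = (\<Sum>l<?N. \<Sum>i<d. \<Sum>k<d. G l i k)"
    by (rule sum.swap)
  finally have eq: "(\<Sum>i<d. \<Sum>k<d. \<rho> i k * entry (fmat_adjoint X * X) k i)
      = (\<Sum>l<?N. \<Sum>i<d. \<Sum>k<d. G l i k)" .
  have "0 \<le> Re (\<Sum>i<d. \<Sum>k<d. G l i k)" for l
  proof -
    have "\<forall>v. 0 \<le> Re (\<Sum>i<d. \<Sum>j<d. cnj (v i) * \<rho> i j * v j)"
      using \<rho> unfolding density_matrix_def by blast
    from spec[OF this, of "\<lambda>i. cnj (entry X l i)"] show ?thesis
      by (simp add: G_def)
  qed
  then show ?thesis
    unfolding expectation_def mtrace_def mat_mult_def eq Re_sum by (rule sum_nonneg)
qed

lemma algebra_state_density_matrix: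
  assumes \<rho>: "density_matrix d \<rho>"
  shows "algebra_state (fmat_id d) fmat_adjoint (\<lambda>X. expectation d \<rho> (entry X))"
proof (intro algebra_state.intro star_corner_fmat algebra_state_axioms.intro)
  show "linear (\<lambda>X. expectation d \<rho> (entry X))"
    by (rule linearI)
      (simp_all add: expectation_def mtrace_def mat_mult_def plus_fmat.rep_eq scaleR_fmat.rep_eq
        distrib_left sum.distrib sum_distrib_left mult.left_commute)
  have "mtrace d \<rho> = 1"
    using \<rho> unfolding density_matrix_def by blast
  moreover have "mtrace d (mat_mult d \<rho> (\<lambda>i j. if i = j then 1 else 0)) = mtrace d \<rho>"
    unfolding mtrace_def by (rule sum.cong) (simp_all add: mat_mult_id_right)
  ultimately show "expectation d \<rho> (entry (fmat_id d)) = 1"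
    unfolding fmat_id_def expectation_entry_fmat_of by (simp add: expectation_def)
  show "0 \<le> expectation d \<rho> (entry (fmat_adjoint X * X))" for X
    using \<rho> by (rule expectation_adjoint_mult_self_nonneg)
qed

section \<open>Pauli strings\<close>

abbreviation binary_digit :: "nat \<Rightarrow> nat \<Rightarrow> nat" where
  "binary_digit l k \<equiv> k div 2 ^ l mod 2"

lemma binary_digit_add_power: "l < m \<Longrightarrow> binary_digit l (2 ^ m + k) = binary_digit l k"
proof -
  assume "l < m"
  then obtain q where "(2::nat) ^ m = 2 ^ l * (2 * q)"
    by (metis less_imp_Suc_add power_add power_Suc mult.left_commute)
  then show ?thesis
    by (simp add: add.commute)
qed

lemma sum_prod_binary_digits:
  fixes f :: "nat \<Rightarrow> nat \<Rightarrow> 'a::comm_semiring_1"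
  shows "(\<Sum>k<2 ^ m. \<Prod>l<m. f l (binary_digit l k)) = (\<Prod>l<m. f l 0 + f l 1)"
proof (induction m)
  case 0
  then show ?case by simp
next
  case (Suc m)
  let ?S = "\<Sum>k<2 ^ m. \<Prod>l<m. f l (binary_digit l k)"
  have shift: "(\<Prod>l<m. f l (binary_digit l (2 ^ m + k))) = (\<Prod>l<m. f l (binary_digit l k))"
    for k
    by (rule prod.cong) (simp_all add: binary_digit_add_power)
  have top: "binary_digit m k = 0" "binary_digit m (2 ^ m + k) = 1" if "k < 2 ^ m" for k
    using that by simp_all
  have split: "(\<Sum>k<a + b. g k) = (\<Sum>k<a. g k) + (\<Sum>k<b. g (a + k))"
    for a b :: nat and g :: "nat \<Rightarrow> 'a"
    by (induction b) (simp_all add: ac_simps)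
  have "(\<Sum>k<2 ^ Suc m. \<Prod>l<Suc m. f l (binary_digit l k))
      = (\<Sum>k<2 ^ m. \<Prod>l<Suc m. f l (binary_digit l k))
        + (\<Sum>k<2 ^ m. \<Prod>l<Suc m. f l (binary_digit l (2 ^ m + k)))"
    using split[where a = "2 ^ m" and b = "2 ^ m"] by (simp add: mult_2)
  also have "\<dots> = ?S * f m 0 + ?S * f m 1"
    unfolding sum_distrib_right by (intro arg_cong2[where f = "(+)"] sum.cong) (simp_all add: shift top)
  finally show ?case
    using Suc by (simp add: distrib_left)
qed

lemma binary_digits_eq_imp_eq:
  "i < 2 ^ m \<Longrightarrow> j < 2 ^ m \<Longrightarrow> (\<And>l. l < m \<Longrightarrow> binary_digit l i = binary_digit l j) \<Longrightarrow> i = j"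
proof (induction m arbitrary: i j)
  case 0
  then show ?case by simp
next
  case (Suc m)
  have "i div 2 = j div 2"
  proof (rule Suc.IH)
    show "i div 2 < 2 ^ m" "j div 2 < 2 ^ m"
      using Suc.prems(1,2) by auto
    show "binary_digit l (i div 2) = binary_digit l (j div 2)" if "l < m" for l
      using Suc.prems(3)[of "Suc l"] that by (simp add: div_mult2_eq)
  qed
  moreover have "i mod 2 = j mod 2"
    using Suc.prems(3)[of 0] by simp
  ultimately show ?case
    by (metis div_mult_mod_eq)
qed

lemma mat_mult_2: "mat_mult 2 A B r c = A r 0 * B 0 c + A r 1 * B 1 c"
  by (simp add: mat_mult_def numeral_2_eq_2 lessThan_Suc)

lemma pauli_mat_mult:
  assumes "length p = m" "length q = m"
  shows "mat_mult (2 ^ m) (pauli_mat p) (pauli_mat q) i j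
    = (\<Prod>l<m. mat_mult 2 (pauli_entry (p ! l)) (pauli_entry (q ! l)) (binary_digit l i) (binary_digit l j))"
proof -
  have "mat_mult (2 ^ m) (pauli_mat p) (pauli_mat q) i j
      = (\<Sum>k<2 ^ m. \<Prod>l<m. pauli_entry (p ! l) (binary_digit l i) (binary_digit l k)
                          * pauli_entry (q ! l) (binary_digit l k) (binary_digit l j))"
    by (simp add: mat_mult_def pauli_mat_def assms prod.distrib)
  also have "\<dots> = (\<Prod>l<m. mat_mult 2 (pauli_entry (p ! l)) (pauli_entry (q ! l)) (binary_digit l i) (binary_digit l j))"
    by (subst sum_prod_binary_digits[of "\<lambda>l x. pauli_entry (p ! l) (binary_digit l i) x
        * pauli_entry (q ! l) x (binary_digit l j)"]) (simp add: mat_mult_2)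
  finally show ?thesis .
qed

lemma pauli_entry_square:
  "r < 2 \<Longrightarrow> c < 2 \<Longrightarrow> mat_mult 2 (pauli_entry a) (pauli_entry a) r c = (if r = c then 1 else 0)"
  by (cases a) (auto simp: mat_mult_2 less_2_cases_iff)

definition pauli_sign :: "pauli \<Rightarrow> pauli \<Rightarrow> complex" where
  "pauli_sign a b = (if a = PI \<or> b = PI \<or> a = b then 1 else -1)"

lemma pauli_entry_commutation:
  "r < 2 \<Longrightarrow> c < 2 \<Longrightarrow>
    mat_mult 2 (pauli_entry a) (pauli_entry b) r c = pauli_sign a b * mat_mult 2 (pauli_entry b) (pauli_entry a) r c"
  by (cases a; cases b) (auto simp: mat_mult_2 pauli_sign_def less_2_cases_iff)

lemma pauli_mat_square:
  assumes "length p = m" "i < 2 ^ m" "j < 2 ^ m"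
  shows "mat_mult (2 ^ m) (pauli_mat p) (pauli_mat p) i j = (if i = j then 1 else 0)"
proof -
  have "mat_mult (2 ^ m) (pauli_mat p) (pauli_mat p) i j
      = (\<Prod>l<m. if binary_digit l i = binary_digit l j then 1 else 0)"
    by (simp add: pauli_mat_mult assms(1) pauli_entry_square)
  also have "\<dots> = (if i = j then 1 else 0)"
    using binary_digits_eq_imp_eq[OF assms(2,3)] by (auto intro: prod_zero)
  finally show ?thesis .
qed

lemma pauli_mat_hermitian: "pauli_mat p j i = cnj (pauli_mat p i j)"
proof -
  have "pauli_entry a c r = cnj (pauli_entry a r c)" for a r c
    by (cases a) auto
  then show ?thesis
    unfolding pauli_mat_def cnj_prod by (intro prod.cong refl)
qed

lemma pauli_mat_commutation:
  assumes "length p = m" "length q = m"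
  shows "mat_mult (2 ^ m) (pauli_mat p) (pauli_mat q) i j
    = (\<Prod>l<m. pauli_sign (p ! l) (q ! l)) * mat_mult (2 ^ m) (pauli_mat q) (pauli_mat p) i j"
proof -
  have "(\<Prod>l<m. mat_mult 2 (pauli_entry (p ! l)) (pauli_entry (q ! l)) (binary_digit l i) (binary_digit l j))
      = (\<Prod>l<m. pauli_sign (p ! l) (q ! l)
          * mat_mult 2 (pauli_entry (q ! l)) (pauli_entry (p ! l)) (binary_digit l i) (binary_digit l j))"
    by (rule prod.cong[OF refl], rule pauli_entry_commutation) simp_all
  then show ?thesis
    by (simp add: pauli_mat_mult assms prod.distrib)
qed

lemma realizationI:
  fixes S :: "'a \<Rightarrow> pauli list"
  assumes len: "\<And>v. length (S v) = m"
    and sign: "\<And>u v. u \<noteq> v \<Longrightarrow> (\<Prod>l<m. pauli_sign (S u ! l) (S v ! l)) = (if E u v then -1 else 1)"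
  shows "realization E m S"
proof -
  have comm: "mat_mult (2 ^ m) (pauli_mat (S u)) (pauli_mat (S v)) i j
      = (if E u v then -1 else 1) * mat_mult (2 ^ m) (pauli_mat (S v)) (pauli_mat (S u)) i j"
    if "u \<noteq> v" for u v i j
    using pauli_mat_commutation[OF len[of u] len[of v]] sign[OF that] by simp
  show ?thesis
    unfolding realization_def mats_anticommute_def mats_commute_def
  proof (intro conjI allI impI len)
    fix u v :: 'a and i j :: nat
    assume "u \<noteq> v"
    from comm[OF this, of i j]
    show "E u v \<Longrightarrow> mat_mult (2 ^ m) (pauli_mat (S u)) (pauli_mat (S v)) i j
        = - mat_mult (2 ^ m) (pauli_mat (S v)) (pauli_mat (S u)) i j"
      and "\<not> E u v \<Longrightarrow> mat_mult (2 ^ m) (pauli_mat (S u)) (pauli_mat (S v)) i j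
        = mat_mult (2 ^ m) (pauli_mat (S v)) (pauli_mat (S u)) i j"
      by simp_all
  qed
qed

lemma div_mod_eq_iff:
  fixes l n :: nat
  assumes "b < n"
  shows "(l div n = a \<and> l mod n = b) \<longleftrightarrow> l = a * n + b"
proof
  assume "l div n = a \<and> l mod n = b"
  then show "l = a * n + b"
    using div_mult_mod_eq[of l n] by simp
next
  assume "l = a * n + b"
  moreover have "n \<noteq> 0"
    using assms by simp
  ultimately show "l div n = a \<and> l mod n = b"
    using assms by simp
qed

text \<open>On the site \<open>(a, b)\<close>, \<open>a < b\<close>, of a pair of vertex indices, the vertex with index \<open>a\<close>
  carries \<open>X\<close> and the one with index \<open>b\<close> carries \<open>Z\<close> if the two are adjacent. Two strings
  can thus fail to commute only at the site of their own pair.\<close>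

definition edge_pauli :: "('a \<Rightarrow> 'a \<Rightarrow> bool) \<Rightarrow> ('a \<Rightarrow> nat) \<Rightarrow> 'a \<Rightarrow> nat \<Rightarrow> nat \<Rightarrow> pauli" where
  "edge_pauli E f v a b =
     (if a < b \<and> a = f v \<and> (\<exists>w. f w = b \<and> E v w) then PX
      else if a < b \<and> b = f v \<and> (\<exists>w. f w = a \<and> E w v) then PZ else PI)"

lemma pauli_sign_edge_pauli:
  assumes f: "inj f" and "u \<noteq> v" and sym: "\<And>x y. E x y \<Longrightarrow> E y x"
  shows "pauli_sign (edge_pauli E f u a b) (edge_pauli E f v a b)
    = (if a = min (f u) (f v) \<and> b = max (f u) (f v) \<and> E u v then -1 else 1)"
proof -
  have f_eq: "f x = f y \<longleftrightarrow> x = y" for x y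
    using f by (auto dest: injD)
  have E_sym: "E v u \<longleftrightarrow> E u v"
    using sym by blast
  from \<open>u \<noteq> v\<close> f_eq consider "f u < f v" | "f v < f u"
    by (metis linorder_neqE_nat)
  then show ?thesis
    by cases (auto simp: pauli_sign_def edge_pauli_def f_eq E_sym)
qed

lemma realization_exists:
  fixes E :: "'a::finite \<Rightarrow> 'a \<Rightarrow> bool"
  assumes sym: "\<And>u v. E u v \<Longrightarrow> E v u"
  shows "\<exists>m S. realization E m S"
proof -
  obtain f :: "'a \<Rightarrow> nat" and n where f: "inj f" "f ` UNIV = {i. i < n}"
    using finite_imp_inj_to_nat_seg[of "UNIV :: 'a set"] by auto
  then have f_less: "f v < n" for v
    by blast
  define S where "S v = map (\<lambda>k. edge_pauli E f v (k div n) (k mod n)) [0..<n * n]" for v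
  have "realization E (n * n) S"
  proof (rule realizationI)
    show "length (S v) = n * n" for v
      by (simp add: S_def)
    show "(\<Prod>l<n * n. pauli_sign (S u ! l) (S v ! l)) = (if E u v then -1 else 1)"
      if "u \<noteq> v" for u v
    proof -
      define site where "site = min (f u) (f v) * n + max (f u) (f v)"
      have "site < (min (f u) (f v) + 1) * n"
        using f_less[of u] f_less[of v] by (simp add: site_def max_def)
      also have "\<dots> \<le> n * n"
        using f_less[of u] f_less[of v] by (intro mult_right_mono) (auto simp: min_def)
      finally have "site < n * n" .
      have "(l div n = min (f u) (f v) \<and> l mod n = max (f u) (f v)) \<longleftrightarrow> l = site" for l
        unfolding site_def by (rule div_mod_eq_iff) (simp add: max_def f_less)
      then have "(\<Prod>l<n * n. pauli_sign (S u ! l) (S v ! l))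
          = (\<Prod>l<n * n. if l = site then (if E u v then -1 else 1) else 1)"
        using pauli_sign_edge_pauli[OF f(1) that sym] by (intro prod.cong) (auto simp: S_def)
      also have "\<dots> = (if E u v then -1 else 1)"
        using \<open>site < n * n\<close> by (simp add: prod.delta)
      finally show ?thesis .
    qed
  qed
  then show ?thesis
    by blast
qed

section \<open>Expectations of a realization\<close>

definition pauli_fmat :: "nat \<Rightarrow> pauli list \<Rightarrow> fmat" where
  "pauli_fmat m p = fmat_of (2 ^ m) (pauli_mat p)"

lemma hermitian_unitary_pauli_fmat:
  assumes "length p = m"
  shows "fmat.hermitian_unitary (2 ^ m) (pauli_fmat m p)"
proof -
  have "fmat_adjoint (pauli_fmat m p) = pauli_fmat m p"
    by (simp add: pauli_fmat_def fmat_adjoint_fmat_of fmat_of_eq_iff flip: pauli_mat_hermitian)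
  moreover have "pauli_fmat m p * pauli_fmat m p = fmat_id (2 ^ m)"
    by (simp add: pauli_fmat_def fmat_id_def fmat_of_mult fmat_of_eq_iff pauli_mat_square[OF assms])
  ultimately show ?thesis
    by (simp add: fmat.hermitian_unitary_def pauli_fmat_def fmat_id_mult)
qed

lemma realization_length: "realization E m S \<Longrightarrow> length (S v) = m"
  by (simp add: realization_def)

lemma realization_anticommute:
  "realization E m S \<Longrightarrow> u \<noteq> v \<Longrightarrow> E u v \<Longrightarrow> anticommute (pauli_fmat m (S u)) (pauli_fmat m (S v))"
  by (simp add: realization_def mats_anticommute_def anticommute_def pauli_fmat_def fmat_of_mult
      fmat_of_uminus fmat_of_eq_iff)

lemma realization_commute:
  assumes "realization E m S" "\<not> E u v"
  shows "commute (pauli_fmat m (S u)) (pauli_fmat m (S v))"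
proof (cases "u = v")
  case False
  with assms have "mats_commute (2 ^ m) (pauli_mat (S u)) (pauli_mat (S v))"
    unfolding realization_def by blast
  then show ?thesis
    by (simp add: mats_commute_def commute_def pauli_fmat_def fmat_of_mult fmat_of_eq_iff)
qed (simp add: commute_def)

lemma realization_commute_or_anticommute:
  assumes "realization E m S"
  shows "commute (pauli_fmat m (S u)) (pauli_fmat m (S v)) \<or> anticommute (pauli_fmat m (S u)) (pauli_fmat m (S v))"
  using realization_commute[OF assms] realization_anticommute[OF assms] commute_refl
  by (cases "u = v") auto

lemma expectation_pauli_fmat:
  "expectation (2 ^ m) \<rho> (entry (pauli_fmat m p)) = expectation (2 ^ m) \<rho> (pauli_mat p)"
  by (simp add: pauli_fmat_def expectation_entry_fmat_of)

lemma realization_clique_bound: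
  fixes E :: "'a::finite \<Rightarrow> 'a \<Rightarrow> bool"
  assumes R: "realization E m S" and \<rho>: "density_matrix (2 ^ m) \<rho>" and "clique E K"
  shows "(\<Sum>v\<in>K. (expectation (2 ^ m) \<rho> (pauli_mat (S v)))\<^sup>2) \<le> 1"
proof -
  interpret algebra_state "fmat_id (2 ^ m)" fmat_adjoint "\<lambda>X. expectation (2 ^ m) \<rho> (entry X)"
    by (rule algebra_state_density_matrix[OF \<rho>])
  have "(\<Sum>v\<in>K. (expectation (2 ^ m) \<rho> (entry (pauli_fmat m (S v))))\<^sup>2) \<le> 1"
    using \<open>clique E K\<close> realization_anticommute[OF R]
      hermitian_unitary_pauli_fmat[OF realization_length[OF R]]
    by (intro phi_anticommuting_sum_sq_le_1) (auto simp: clique_def)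
  then show ?thesis
    by (simp add: expectation_pauli_fmat)
qed

lemma realization_odd_cycle:
  assumes R: "realization E m S" and "odd_cycle E C a"
  obtains vs where "distinct vs" "set vs = C" "length vs = 2 * a + 1" "1 \<le> a"
    "fmat.anticommuting_cycle (2 ^ m) (map (\<lambda>v. pauli_fmat m (S v)) vs)"
proof -
  obtain vs where a: "1 \<le> a" and vs: "distinct vs" "length vs = 2 * a + 1" "set vs = C"
    and cyc: "\<forall>i < length vs. E (vs ! i) (vs ! ((i + 1) mod length vs))"
    using \<open>odd_cycle E C a\<close> unfolding odd_cycle_def by blast
  let ?T = "\<lambda>v. pauli_fmat m (S v)"
  have anti: "anticommute (?T (vs ! i)) (?T (vs ! j))"
    if "i < length vs" "j < length vs" "i \<noteq> j" "E (vs ! i) (vs ! j)" for i j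
    using realization_anticommute[OF R] that vs(1) by (simp add: nth_eq_iff_index_eq)
  have "successively anticommute (map ?T vs)"
    unfolding successively_conv_nth
  proof (intro allI impI)
    fix i
    assume i: "Suc i < length (map ?T vs)"
    then have "E (vs ! i) (vs ! Suc i)"
      using cyc[rule_format, of i] by simp
    then show "anticommute (map ?T vs ! i) (map ?T vs ! Suc i)"
      using anti[of i "Suc i"] i by simp
  qed
  moreover have "anticommute (last (map ?T vs)) (hd (map ?T vs))"
  proof -
    have "E (vs ! (length vs - 1)) (vs ! 0)"
      using cyc[rule_format, of "length vs - 1"] vs(2) by simp
    moreover have "vs \<noteq> []"
      using vs(2) by auto
    ultimately show ?thesis
      using anti[of "length vs - 1" 0] vs(2) a by (simp add: last_map hd_map last_conv_nth hd_conv_nth)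
  qed
  ultimately have "fmat.anticommuting_cycle (2 ^ m) (map ?T vs)"
    using hermitian_unitary_pauli_fmat[OF realization_length[OF R]]
      realization_commute_or_anticommute[OF R]
    unfolding fmat.anticommuting_cycle_def by auto
  with vs a show ?thesis
    using that by blast
qed

lemma realization_odd_cycle_bound:
  assumes R: "realization E m S" and \<rho>: "density_matrix (2 ^ m) \<rho>" and "odd_cycle E C a"
  shows "(\<Sum>v\<in>C. (expectation (2 ^ m) \<rho> (pauli_mat (S v)))\<^sup>2) \<le> real a"
proof -
  interpret algebra_state "fmat_id (2 ^ m)" fmat_adjoint "\<lambda>X. expectation (2 ^ m) \<rho> (entry X)"
    by (rule algebra_state_density_matrix[OF \<rho>])
  obtain vs where vs: "distinct vs" "set vs = C" "length vs = 2 * a + 1" "1 \<le> a"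
    and cycle: "fmat.anticommuting_cycle (2 ^ m) (map (\<lambda>v. pauli_fmat m (S v)) vs)"
    using realization_odd_cycle[OF R \<open>odd_cycle E C a\<close>] .
  have "(\<Sum>t\<leftarrow>map (\<lambda>v. pauli_fmat m (S v)) vs. (expectation (2 ^ m) \<rho> (entry t))\<^sup>2) \<le> real a"
    using cycle vs(3,4) by (intro phi_anticommuting_cycle_bound) simp_all
  then show ?thesis
    using vs(1,2) by (simp add: sum_list_distinct_conv_sum_set expectation_pauli_fmat comp_def)
qed

lemma realization_expectations_in_STAB:
  fixes E :: "'a::finite \<Rightarrow> 'a \<Rightarrow> bool"
  assumes "h_perfect E" "realization E m S" "density_matrix (2 ^ m) \<rho>"
  shows "(\<chi> v. (expectation (2 ^ m) \<rho> (pauli_mat (S v)))\<^sup>2) \<in> STAB E"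
  using assms(1) realization_clique_bound[OF assms(2,3)] realization_odd_cycle_bound[OF assms(2,3)]
  unfolding h_perfect_def by simp

lemma weighted_sum_le_alpha_if_STAB:
  assumes "x \<in> STAB E"
  shows "(\<Sum>i\<in>UNIV. w i * x $ i) \<le> alpha E w"
proof -
  have fin: "finite {(\<Sum>i\<in>I. w i) | I. independent_set E I}"
    by simp
  have "indep_vec I \<in> {y. (\<chi> i. w i) \<bullet> y \<le> alpha E w}" if "independent_set E I" for I
  proof -
    have "(\<chi> i. w i) \<bullet> indep_vec I = (\<Sum>i\<in>I. w i)"
      by (simp add: inner_vec_def indep_vec_def if_distrib sum.If_cases)
    also have "\<dots> \<le> alpha E w"
      unfolding alpha_def using that by (intro Max_ge[OF fin]) auto
    finally show ?thesis
      by simp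
  qed
  then have "STAB E \<subseteq> {y. (\<chi> i. w i) \<bullet> y \<le> alpha E w}"
    unfolding STAB_def by (intro hull_minimal convex_halfspace_le) auto
  then show ?thesis
    using assms by (auto simp: inner_vec_def)
qed

lemma alpha_attained:
  fixes E :: "'a::finite \<Rightarrow> 'a \<Rightarrow> bool"
  shows "\<exists>I. independent_set E I \<and> alpha E w = (\<Sum>i\<in>I. w i)"
proof -
  have "alpha E w \<in> {(\<Sum>i\<in>I. w i) | I. independent_set E I}"
    unfolding alpha_def by (rule Max_in) (auto simp: independent_set_def)
  then show ?thesis
    by auto
qed

definition maximally_mixed :: "nat \<Rightarrow> nat \<Rightarrow> nat \<Rightarrow> complex" where
  "maximally_mixed d i j = (if i = j then 1 / of_nat d else 0)"

lemma density_matrix_maximally_mixed: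
  assumes "0 < d"
  shows "density_matrix d (maximally_mixed d)"
  unfolding density_matrix_def
proof (intro conjI allI impI)
  show "maximally_mixed d i j = cnj (maximally_mixed d j i)" for i j
    by (simp add: maximally_mixed_def)
  show "0 \<le> Re (\<Sum>i<d. \<Sum>j<d. cnj (v i) * maximally_mixed d i j * v j)" for v
  proof -
    have "(\<Sum>j<d. cnj (v i) * maximally_mixed d i j * v j) = of_real ((cmod (v i))\<^sup>2 / d)"
      if "i < d" for i
    proof -
      have "(\<Sum>j<d. cnj (v i) * maximally_mixed d i j * v j)
          = (\<Sum>j<d. if j = i then cnj (v i) * v i / of_nat d else 0)"
        by (rule sum.cong) (auto simp: maximally_mixed_def)
      also have "\<dots> = cnj (v i) * v i / of_nat d"
        using that by simp
      also have "\<dots> = of_real ((cmod (v i))\<^sup>2 / d)"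
        using complex_norm_square[of "v i"] by (simp add: mult.commute)
      finally show ?thesis .
    qed
    then have "(\<Sum>i<d. \<Sum>j<d. cnj (v i) * maximally_mixed d i j * v j)
        = of_real (\<Sum>i<d. (cmod (v i))\<^sup>2 / d)"
      unfolding of_real_sum by (intro sum.cong) simp_all
    then show ?thesis
      by (simp add: sum_nonneg)
  qed
  show "mtrace d (maximally_mixed d) = 1"
    using assms by (simp add: mtrace_def maximally_mixed_def)
qed

lemma expectation_maximally_mixed: "expectation d (maximally_mixed d) A = Re (mtrace d A) / d"
proof -
  have "mat_mult d (maximally_mixed d) A i i = A i i / of_nat d" if "i < d" for i
    using that by (simp add: mat_mult_def maximally_mixed_def if_distrib[of "\<lambda>x. x * _"] cong: if_cong)
  then have "mtrace d (mat_mult d (maximally_mixed d) A) = mtrace d A / of_nat d"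
    unfolding mtrace_def sum_divide_distrib by (intro sum.cong) simp_all
  then show ?thesis
    by (simp add: expectation_def)
qed

lemma entry_projection_beyond:
  assumes "fmat.projection d P"
  shows "\<forall>i k. d \<le> k \<longrightarrow> entry P i k = 0"
proof (intro allI impI)
  fix i k
  assume "d \<le> k"
  have "entry P i k = entry (P * fmat_id d) i k"
    using fmat.projection_mult_e[OF assms] by simp
  also have "\<dots> = 0"
    using \<open>d \<le> k\<close> by (simp add: entry_times_support_bound[OF order.refl] fmat_id_def fmat_of.rep_eq)
  finally show "entry P i k = 0" .
qed

lemma mtrace_self_adjoint_real:
  assumes "fmat_adjoint X = X"
  shows "mtrace d (entry X) = of_real (Re (mtrace d (entry X)))"
proof -
  have "Im (entry X i i) = 0" for i
    using arg_cong[OF assms, of "\<lambda>Y. Im (entry Y i i)"] by (simp add: fmat_adjoint.rep_eq)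
  then show ?thesis
    by (simp add: mtrace_def complex_eq_iff)
qed

lemma density_matrix_normalized_projection:
  assumes P: "fmat.projection d P" and "0 < D" and tr: "mtrace d (entry P) = of_real D"
  shows "density_matrix d (\<lambda>i j. entry P i j / of_real D)"
  unfolding density_matrix_def
proof (intro conjI allI impI)
  have adj: "fmat_adjoint P = P" and idem: "P * P = P"
    using P by (simp_all add: fmat.projection_def)
  show "entry P i j / of_real D = cnj (entry P j i / of_real D)" for i j
    using arg_cong[OF adj, of "\<lambda>Y. entry Y i j"] by (simp add: fmat_adjoint.rep_eq)
  show "0 \<le> Re (\<Sum>i<d. \<Sum>j<d. cnj (v i) * (entry P i j / of_real D) * v j)" for v
  proof -
    have "(\<Sum>i<d. \<Sum>j<d. cnj (v i) * (entry P i j / of_real D) * v j)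
        = (\<Sum>i<d. \<Sum>j<d. cnj (v i) * entry (fmat_adjoint P * P) i j * v j) / of_real D"
      by (simp add: adj idem sum_divide_distrib)
    then show ?thesis
      using \<open>0 < D\<close> quadratic_form_fmat_adjoint_mult_self_nonneg[where v = v and d = d and X = P]
      by (simp add: Re_divide_of_real)
  qed
  show "mtrace d (\<lambda>i j. entry P i j / of_real D) = 1"
    using tr \<open>0 < D\<close> by (simp add: mtrace_def flip: sum_divide_distrib)
qed

lemma expectation_normalized_projection_sq:
  assumes P: "fmat.projection d P" and "0 < D" and tr: "mtrace d (entry P) = of_real D"
    and T: "fmat_adjoint T = T" "T * P = P \<or> T * P = - P"
  shows "(expectation d (\<lambda>i j. entry P i j / of_real D) (entry T))\<^sup>2 = 1"
proof -
  have "P * T = P \<or> P * T = - P"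
    using T P by (metis fmat.projection_def fmat_adjoint_mult fmat.adj_scale scaleR_minus1_left)
  then have "mtrace d (entry (P * T)) = of_real D \<or> mtrace d (entry (P * T)) = - of_real D"
    using tr by (auto simp: mtrace_def uminus_fmat.rep_eq sum_negf)
  moreover have "mtrace d (mat_mult d (\<lambda>i j. entry P i j / of_real D) (entry T))
      = mtrace d (entry (P * T)) / of_real D"
    using entry_projection_beyond[OF P]
    by (simp add: mtrace_def mat_mult_def entry_times sum_divide_distrib)
  ultimately show ?thesis
    using \<open>0 < D\<close> by (auto simp: expectation_def)
qed

lemma realization_sharp_state:
  fixes E :: "'a::finite \<Rightarrow> 'a \<Rightarrow> bool"
  assumes R: "realization E m S" and I: "independent_set E I"
  shows "\<exists>\<rho>. density_matrix (2 ^ m) \<rho> \<and> (\<forall>v\<in>I. (expectation (2 ^ m) \<rho> (pauli_mat (S v)))\<^sup>2 = 1)"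
proof -
  let ?d = "2 ^ m :: nat"
  let ?T = "\<lambda>v. pauli_fmat m (S v)"
  interpret algebra_state "fmat_id ?d" fmat_adjoint "\<lambda>X. expectation ?d (maximally_mixed ?d) (entry X)"
    by (intro algebra_state_density_matrix density_matrix_maximally_mixed) simp
  have hu: "fmat.hermitian_unitary ?d (?T v)" for v
    by (rule hermitian_unitary_pauli_fmat[OF realization_length[OF R]])
  have "\<forall>t\<in>?T ` I. \<forall>u\<in>?T ` I. commute t u"
    using I realization_commute[OF R] by (auto simp: independent_set_def)
  then obtain P where P: "fmat.projection ?d P" "0 < expectation ?d (maximally_mixed ?d) (entry P)"
    and eigen: "\<forall>t\<in>?T ` I. t * P = P \<or> t * P = - P"
    using joint_eigenprojection[of "?T ` I"] hu by auto
  define D where "D = Re (mtrace ?d (entry P))"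
  have "0 < D"
    using P(2) by (simp add: D_def expectation_maximally_mixed zero_less_divide_iff)
  have tr: "mtrace ?d (entry P) = of_real D"
    using P(1) mtrace_self_adjoint_real by (simp add: D_def fmat.projection_def)
  have "(expectation ?d (\<lambda>i j. entry P i j / of_real D) (entry (?T v)))\<^sup>2 = 1" if "v \<in> I" for v
    using P(1) \<open>0 < D\<close> tr fmat.hermitian_unitaryD(1)[OF hu] eigen that
    by (intro expectation_normalized_projection_sq) auto
  then show ?thesis
    using density_matrix_normalized_projection[OF P(1) \<open>0 < D\<close> tr]
    by (auto simp: expectation_pauli_fmat)
qed

lemma realization_expectation_sum_le_alpha:
  fixes E :: "'a::finite \<Rightarrow> 'a \<Rightarrow> bool"
  assumes "h_perfect E" "realization E m S" "density_matrix (2 ^ m) \<rho>"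
  shows "(\<Sum>v\<in>UNIV. w v * (expectation (2 ^ m) \<rho> (pauli_mat (S v)))\<^sup>2) \<le> alpha E w"
  using weighted_sum_le_alpha_if_STAB[OF realization_expectations_in_STAB[OF assms]] by simp

lemma realization_attains_alpha:
  fixes E :: "'a::finite \<Rightarrow> 'a \<Rightarrow> bool"
  assumes R: "realization E m S" and w: "\<forall>v. 0 \<le> w v"
  shows "\<exists>\<rho>. density_matrix (2 ^ m) \<rho>
    \<and> alpha E w \<le> (\<Sum>v\<in>UNIV. w v * (expectation (2 ^ m) \<rho> (pauli_mat (S v)))\<^sup>2)"
proof -
  obtain I where I: "independent_set E I" "alpha E w = (\<Sum>v\<in>I. w v)"
    using alpha_attained by blast
  obtain \<rho> where \<rho>: "density_matrix (2 ^ m) \<rho>"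
    "\<forall>v\<in>I. (expectation (2 ^ m) \<rho> (pauli_mat (S v)))\<^sup>2 = 1"
    using realization_sharp_state[OF R I(1)] by blast
  have "alpha E w = (\<Sum>v\<in>I. w v * (expectation (2 ^ m) \<rho> (pauli_mat (S v)))\<^sup>2)"
    using I(2) \<rho>(2) by simp
  also have "\<dots> \<le> (\<Sum>v\<in>UNIV. w v * (expectation (2 ^ m) \<rho> (pauli_mat (S v)))\<^sup>2)"
    using w by (intro sum_mono2) auto
  finally show ?thesis
    using \<rho>(1) by blast
qed

lemma realization_SUP_eq_alpha:
  fixes E :: "'a::finite \<Rightarrow> 'a \<Rightarrow> bool"
  assumes "h_perfect E" "realization E m S" "\<forall>v. 0 \<le> w v"
  shows "(SUP \<rho>\<in>{\<rho>. density_matrix (2 ^ m) \<rho>}.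
      \<Sum>v\<in>UNIV. w v * (expectation (2 ^ m) \<rho> (pauli_mat (S v)))\<^sup>2) = alpha E w"
proof -
  obtain \<rho> where "density_matrix (2 ^ m) \<rho>"
    "alpha E w \<le> (\<Sum>v\<in>UNIV. w v * (expectation (2 ^ m) \<rho> (pauli_mat (S v)))\<^sup>2)"
    using realization_attains_alpha[OF assms(2,3)] by blast
  with realization_expectation_sum_le_alpha[OF assms(1,2)] show ?thesis
    by (intro cSup_eq_maximum) (auto intro: order.antisym)
qed

theorem theorem2:
  fixes E :: "'a::finite \<Rightarrow> 'a \<Rightarrow> bool"
  assumes "\<And>u v. E u v \<Longrightarrow> E v u"
    and "\<And>v. \<not> E v v"
    and "h_perfect E"
  shows "hbar_perfect E"
proof -
  obtain m S where mS: "(m, S) = (SOME mS. realization E (fst mS) (snd mS))"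
    by (metis surj_pair)
  have "\<exists>mS. realization E (fst mS) (snd mS)"
    using realization_exists[OF assms(1)] by auto
  then have "realization E m S"
    using mS by (metis fst_conv snd_conv someI_ex)
  then show ?thesis
    using realization_SUP_eq_alpha[OF assms(3)]
    unfolding hbar_perfect_def beta_def expectation_def by (simp flip: mS)
qed

end
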